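(* Assume that for all $\emptyset\subsetneq u\subsetneq[1:p]$ we have estimators $\widehat W_u$ that converge to $W_u$ in probability (resp. almost surely) when $N_u\to+\infty$, where $\kappa N_u$ is the cost of $\widehat W_u$. If we use the subset $W$-aggregation procedure with $N_u=N_u^*:=\mathrm{Round}\big(N_{tot}\kappa^{-1}\binom{p}{|u|}^{-1}(p-1)^{-1}\big)$ for $\emptyset\subsetneq u\subsetneq[1:p]$ ($\mathrm{Round}$ = nearest integer), then the estimators of the Shapley effects converge to the Shapley effects in probability (resp. almost surely) when $N_{tot}\to+\infty$, where $N_{tot}$ is the total cost of the subset $W$-aggregation procedure.
   Context: Setting: $\mathbf{X}=(X_1,\dots,X_p)$, $Y=f(\mathbf{X})$ with $f\in L^2(\mathbb{P}_\mathbf{X})$. $W_u$ denotes either $V_u=\mathrm{Var}(\mathrm{E}(Y|\mathbf{X}_u))$ or $E_u=\mathrm{E}(\mathrm{Var}(Y|\mathbf{X}_{-u}))$ ($-u=[1:p]\setminus u$), with $W_\emptyset=0$, $W_{[1:p]}=\mathrm{Var}(Y)$ known. Shapley effects: $\eta_i=\frac{1}{p\mathrm{Var}(Y)}\sum_{u\subset -i}\binom{p-1}{|u|}^{-1}(W_{u\cup\{i\}}-W_u)$. Subset $W$-aggregation procedure: compute each $\widehat W_u$ once and set $\widehat\eta_i=\frac{1}{p\mathrm{Var}(Y)}\sum_{u\subset -i}\binom{p-1}{|u|}^{-1}(\widehat W_{u\cup\{i\}}-\widehat W_u)$. The cost is the number of evaluations of $f$. *)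

theory Defs
  imports "HOL-Probability.Probability"
begin

text \<open>Shapley effects computed from a family of values V_u (V_emptyset = 0, V_[1:p] = Var Y).\<close>
definition shapley_W :: "nat \<Rightarrow> (nat set \<Rightarrow> real) \<Rightarrow> nat \<Rightarrow> real" where
  "shapley_W p V i =
     (1 / (real p * V {1..p})) *
     (\<Sum>u\<in>Pow ({1..p} - {i}). (V (insert i u) - V u) / real ((p - 1) choose card u))"

definition agg_W :: "nat \<Rightarrow> real \<Rightarrow> (nat set \<Rightarrow> nat \<Rightarrow> 'a \<Rightarrow> real) \<Rightarrow> (nat set \<Rightarrow> nat) \<Rightarrow> 'a
                     \<Rightarrow> nat set \<Rightarrow> real" where
  "agg_W p VarY What N \<omega> u =
     (if u = {} then 0 else if u = {1..p} then VarY else What u (N u) \<omega>)"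

definition N_star :: "nat \<Rightarrow> real \<Rightarrow> real \<Rightarrow> nat set \<Rightarrow> nat" where
  "N_star p \<kappa> Ntot u =
     nat (round (Ntot / \<kappa> / real (p choose card u) / real (p - 1)))"

definition conv_in_prob :: "'a measure \<Rightarrow> ('i \<Rightarrow> 'a \<Rightarrow> real) \<Rightarrow> real \<Rightarrow> 'i filter \<Rightarrow> bool" where
  "conv_in_prob M X L F \<longleftrightarrow>
     (\<forall>\<epsilon>>0. ((\<lambda>n. measure M {\<omega>\<in>space M. \<epsilon> < \<bar>X n \<omega> - L\<bar>}) \<longlongrightarrow> 0) F)"

definition conv_as :: "'a measure \<Rightarrow> ('i \<Rightarrow> 'a \<Rightarrow> real) \<Rightarrow> real \<Rightarrow> 'i filter \<Rightarrow> bool" where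
  "conv_as M X L F \<longleftrightarrow> (AE \<omega> in M. ((\<lambda>n. X n \<omega>) \<longlongrightarrow> L) F)"

end

theory Submission imports Defs begin

text \<open>Each Shapley estimator is a fixed finite linear combination of the subset estimators, with
  coefficients depending only on \<open>p\<close> and the known value \<open>Var Y\<close>. For \<open>\<emptyset> \<subset> u \<subset> [1:p]\<close> the
  sample size \<open>N\<^sub>u\<^sup>*\<close> grows linearly in \<open>N\<^sub>t\<^sub>o\<^sub>t\<close>, so the estimator of \<open>W\<^sub>u\<close> run with \<open>N\<^sub>u\<^sup>*\<close>
  samples converges; both convergence in probability (by the union bound) and almost sure
  convergence (a finite union of null sets is null) are preserved by finite linear combinations.\<close>

lemma conv_in_prob_const: "conv_in_prob M (\<lambda>n \<omega>. c) c F"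
  unfolding conv_in_prob_def by simp

lemma conv_in_prob_cmult:
  assumes "conv_in_prob M X L F"
  shows "conv_in_prob M (\<lambda>n \<omega>. c * X n \<omega>) (c * L) F"
proof (cases "c = 0")
  case True
  then show ?thesis unfolding conv_in_prob_def by simp
next
  case False
  show ?thesis unfolding conv_in_prob_def
  proof (intro allI impI)
    fix e :: real
    assume "e > 0"
    with False assms have "((\<lambda>n. measure M {\<omega>\<in>space M. e / \<bar>c\<bar> < \<bar>X n \<omega> - L\<bar>}) \<longlongrightarrow> 0) F"
      unfolding conv_in_prob_def by simp
    moreover have "e < \<bar>c * X n \<omega> - c * L\<bar> \<longleftrightarrow> e / \<bar>c\<bar> < \<bar>X n \<omega> - L\<bar>" for n \<omega>
    proof -
      have "\<bar>c * X n \<omega> - c * L\<bar> = \<bar>c\<bar> * \<bar>X n \<omega> - L\<bar>"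
        by (simp add: abs_mult flip: right_diff_distrib)
      then show ?thesis
        using False by (simp add: divide_less_eq mult.commute)
    qed
    ultimately show "((\<lambda>n. measure M {\<omega>\<in>space M. e < \<bar>c * X n \<omega> - c * L\<bar>}) \<longlongrightarrow> 0) F"
      by simp
  qed
qed

lemma conv_in_prob_add:
  assumes "finite_measure M"
    and X: "conv_in_prob M X a F" and Y: "conv_in_prob M Y b F"
    and "\<And>n. X n \<in> borel_measurable M" "\<And>n. Y n \<in> borel_measurable M"
  shows "conv_in_prob M (\<lambda>n \<omega>. X n \<omega> + Y n \<omega>) (a + b) F"
  unfolding conv_in_prob_def
proof (intro allI impI)
  fix e :: real
  assume "e > 0"
  define A where "A n = {\<omega>\<in>space M. e/2 < \<bar>X n \<omega> - a\<bar>}" for n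
  define B where "B n = {\<omega>\<in>space M. e/2 < \<bar>Y n \<omega> - b\<bar>}" for n
  have "e/2 > 0"
    using \<open>e > 0\<close> by simp
  have "((\<lambda>n. measure M (A n)) \<longlongrightarrow> 0) F" "((\<lambda>n. measure M (B n)) \<longlongrightarrow> 0) F"
    unfolding A_def B_def
    using X[unfolded conv_in_prob_def, rule_format, OF \<open>e/2 > 0\<close>]
      Y[unfolded conv_in_prob_def, rule_format, OF \<open>e/2 > 0\<close>] .
  then have AB: "((\<lambda>n. measure M (A n) + measure M (B n)) \<longlongrightarrow> 0) F"
    by (rule tendsto_add_zero)
  have AB_sets: "A n \<in> sets M" "B n \<in> sets M" for n
    unfolding A_def B_def using assms(4,5)[of n] by measurable
  have union_bound: "measure M {\<omega>\<in>space M. e < \<bar>X n \<omega> + Y n \<omega> - (a + b)\<bar>}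
      \<le> measure M (A n) + measure M (B n)" for n
  proof -
    have "{\<omega>\<in>space M. e < \<bar>X n \<omega> + Y n \<omega> - (a + b)\<bar>} \<subseteq> A n \<union> B n"
      unfolding A_def B_def by (auto simp: abs_if)
    then have "measure M {\<omega>\<in>space M. e < \<bar>X n \<omega> + Y n \<omega> - (a + b)\<bar>} \<le> measure M (A n \<union> B n)"
      using AB_sets by (intro finite_measure.finite_measure_mono[OF assms(1)]) auto
    also have "\<dots> \<le> measure M (A n) + measure M (B n)"
      by (rule measure_Un_le[OF AB_sets])
    finally show ?thesis .
  qed
  show "((\<lambda>n. measure M {\<omega>\<in>space M. e < \<bar>X n \<omega> + Y n \<omega> - (a + b)\<bar>}) \<longlongrightarrow> 0) F"
    by (rule tendsto_sandwich[OF _ _ tendsto_const AB]) (simp_all add: union_bound)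
qed

lemma conv_in_prob_diff:
  assumes "finite_measure M" "conv_in_prob M X a F" "conv_in_prob M Y b F"
    and "\<And>n. X n \<in> borel_measurable M" "\<And>n. Y n \<in> borel_measurable M"
  shows "conv_in_prob M (\<lambda>n \<omega>. X n \<omega> - Y n \<omega>) (a - b) F"
  using conv_in_prob_add[OF assms(1,2) conv_in_prob_cmult[OF assms(3), of "-1"]] assms(4,5)
  by simp

lemma conv_in_prob_sum:
  assumes "finite S" "finite_measure M"
    and "\<And>k n. k \<in> S \<Longrightarrow> X k n \<in> borel_measurable M"
    and "\<And>k. k \<in> S \<Longrightarrow> conv_in_prob M (X k) (L k) F"
  shows "conv_in_prob M (\<lambda>n \<omega>. \<Sum>k\<in>S. X k n \<omega>) (\<Sum>k\<in>S. L k) F"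
  using assms
proof (induction S rule: finite_induct)
  case empty
  then show ?case
    using conv_in_prob_const[of M 0 F] by simp
next
  case (insert k S)
  have "conv_in_prob M (\<lambda>n \<omega>. X k n \<omega> + (\<Sum>k\<in>S. X k n \<omega>)) (L k + (\<Sum>k\<in>S. L k)) F"
    by (rule conv_in_prob_add) (use insert in auto)
  with insert.hyps show ?case
    by simp
qed

lemma conv_in_prob_filterlim_compose:
  assumes "conv_in_prob M X L F" "filterlim g F G"
  shows "conv_in_prob M (\<lambda>t. X (g t)) L G"
  unfolding conv_in_prob_def
proof (intro allI impI)
  fix e :: real
  assume "e > 0"
  with assms(1) have "((\<lambda>n. measure M {\<omega>\<in>space M. e < \<bar>X n \<omega> - L\<bar>}) \<longlongrightarrow> 0) F"
    unfolding conv_in_prob_def by blast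
  from filterlim_compose[OF this assms(2)]
  show "((\<lambda>t. measure M {\<omega>\<in>space M. e < \<bar>X (g t) \<omega> - L\<bar>}) \<longlongrightarrow> 0) G" .
qed

lemma filterlim_nat_round_at_top: "filterlim (\<lambda>x::real. nat (round x)) at_top at_top"
proof -
  have "filterlim (\<lambda>x::real. 1/2 + x) at_top at_top"
    by (rule filterlim_tendsto_add_at_top[OF tendsto_const filterlim_ident])
  then show ?thesis
    unfolding round_def add.commute[of _ "1/2"]
    by (intro filterlim_compose[OF filterlim_nat_sequentially]
        filterlim_compose[OF filterlim_floor_sequentially])
qed

lemma N_star_at_top:
  assumes "\<kappa> > 0" "u \<noteq> {}" "u \<subset> {1..p}"
  shows "filterlim (\<lambda>Ntot. N_star p \<kappa> Ntot u) at_top at_top"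
proof -
  have "finite u"
    using assms(3) finite_subset by blast
  with assms(2,3) have "0 < card u" "card u < p"
    using psubset_card_mono[of "{1..p}" u] by auto
  then have "0 < inverse (\<kappa> * real (p choose card u) * real (p - 1))"
    using assms(1) by simp
  then have "filterlim (\<lambda>Ntot. inverse (\<kappa> * real (p choose card u) * real (p - 1)) * Ntot)
      at_top at_top"
    by (rule filterlim_tendsto_pos_mult_at_top[OF tendsto_const _ filterlim_ident])
  then have "filterlim (\<lambda>Ntot. nat (round (inverse (\<kappa> * real (p choose card u) * real (p - 1)) * Ntot)))
      at_top at_top"
    by (rule filterlim_compose[OF filterlim_nat_round_at_top])
  then show ?thesis
    unfolding N_star_def by (simp add: field_simps)
qed

lemma shapley_W_eq_weighted_sum:
  "shapley_W p V i = (\<Sum>u\<in>Pow ({1..p} - {i}).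
      (1 / (real p * V {1..p}) / real ((p - 1) choose card u)) * (V (insert i u) - V u))"
  unfolding shapley_W_def sum_distrib_left by (rule sum.cong) auto

lemma tendsto_shapley_W:
  assumes "i \<in> {1..p}"
    and "\<And>u. u \<subseteq> {1..p} \<Longrightarrow> ((\<lambda>t. V t u) \<longlongrightarrow> W u) F"
    and "\<And>t. V t {1..p} = W {1..p}"
  shows "((\<lambda>t. shapley_W p (V t) i) \<longlongrightarrow> shapley_W p W i) F"
  unfolding shapley_W_eq_weighted_sum assms(3)
  using assms(1) by (intro tendsto_sum tendsto_mult tendsto_const tendsto_diff assms(2)) auto

lemma conv_in_prob_shapley_W:
  assumes "finite_measure M" "i \<in> {1..p}"
    and "\<And>u t. u \<subseteq> {1..p} \<Longrightarrow> (\<lambda>\<omega>. V t \<omega> u) \<in> borel_measurable M"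
    and "\<And>u. u \<subseteq> {1..p} \<Longrightarrow> conv_in_prob M (\<lambda>t \<omega>. V t \<omega> u) (W u) F"
    and "\<And>t \<omega>. V t \<omega> {1..p} = W {1..p}"
  shows "conv_in_prob M (\<lambda>t \<omega>. shapley_W p (V t \<omega>) i) (shapley_W p W i) F"
  unfolding shapley_W_eq_weighted_sum assms(5)
proof (rule conv_in_prob_sum)
  fix u t
  assume "u \<in> Pow ({1..p} - {i})"
  with assms(2) have "insert i u \<subseteq> {1..p}" "u \<subseteq> {1..p}"
    by auto
  then show "(\<lambda>\<omega>. 1 / (real p * W {1..p}) / real ((p - 1) choose card u) *
      (V t \<omega> (insert i u) - V t \<omega> u)) \<in> borel_measurable M"
    by (intro borel_measurable_times borel_measurable_const borel_measurable_diff assms(3))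
next
  fix u
  assume "u \<in> Pow ({1..p} - {i})"
  with assms(2) have ins: "insert i u \<subseteq> {1..p}" and u: "u \<subseteq> {1..p}"
    by auto
  show "conv_in_prob M (\<lambda>t \<omega>. 1 / (real p * W {1..p}) / real ((p - 1) choose card u) *
      (V t \<omega> (insert i u) - V t \<omega> u)) (1 / (real p * W {1..p}) / real ((p - 1) choose card u) *
      (W (insert i u) - W u)) F"
    by (intro conv_in_prob_cmult conv_in_prob_diff[OF assms(1) assms(4)[OF ins] assms(4)[OF u]]
        assms(3)[OF ins] assms(3)[OF u])
qed (simp_all add: assms(1))

lemma agg_W_empty: "agg_W p c What N \<omega> {} = 0"
  unfolding agg_W_def by simp

text \<open>The hypothesis \<open>W {} = 0\<close> covers \<open>p = 0\<close>, where \<open>{1..p} = {}\<close>.\<close>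

lemma agg_W_top: "W {} = 0 \<Longrightarrow> agg_W p (W {1..p}) What N \<omega> {1..p} = W {1..p}"
  unfolding agg_W_def by auto

lemma agg_W_proper: "u \<noteq> {} \<Longrightarrow> u \<noteq> {1..p} \<Longrightarrow> agg_W p c What N \<omega> u = What u (N u) \<omega>"
  unfolding agg_W_def by simp

lemma agg_W_measurable:
  assumes "W {} = 0" "u \<subseteq> {1..p}"
    and "u \<noteq> {} \<Longrightarrow> u \<subset> {1..p} \<Longrightarrow> What u (N u) \<in> borel_measurable M"
  shows "(\<lambda>\<omega>. agg_W p (W {1..p}) What N \<omega> u) \<in> borel_measurable M"
proof -
  consider "u = {}" | "u = {1..p}" | "u \<noteq> {}" "u \<subset> {1..p}"
    using assms(2) by blast
  then show ?thesis
  proof cases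
    case 1
    show ?thesis unfolding 1 agg_W_empty by simp
  next
    case 2
    show ?thesis unfolding 2 agg_W_top[of W, OF assms(1)] by simp
  next
    case 3
    then show ?thesis using assms(3) by (simp add: agg_W_proper)
  qed
qed

lemma conv_in_prob_agg_W:
  assumes "W {} = 0" "u \<subseteq> {1..p}"
    and "u \<noteq> {} \<Longrightarrow> u \<subset> {1..p} \<Longrightarrow> conv_in_prob M (What u) (W u) sequentially"
    and "u \<noteq> {} \<Longrightarrow> u \<subset> {1..p} \<Longrightarrow> filterlim (\<lambda>t. N t u) at_top F"
  shows "conv_in_prob M (\<lambda>t \<omega>. agg_W p (W {1..p}) What (N t) \<omega> u) (W u) F"
proof -
  consider "u = {}" | "u = {1..p}" | "u \<noteq> {}" "u \<subset> {1..p}"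
    using assms(2) by blast
  then show ?thesis
  proof cases
    case 1
    show ?thesis unfolding 1 agg_W_empty assms(1) by (rule conv_in_prob_const)
  next
    case 2
    show ?thesis unfolding 2 agg_W_top[of W, OF assms(1)] by (rule conv_in_prob_const)
  next
    case 3
    then show ?thesis
      using conv_in_prob_filterlim_compose[OF assms(3,4)] by (simp add: agg_W_proper)
  qed
qed

lemma tendsto_agg_W:
  assumes "W {} = 0" "u \<subseteq> {1..p}"
    and "u \<noteq> {} \<Longrightarrow> u \<subset> {1..p} \<Longrightarrow> ((\<lambda>n. What u n \<omega>) \<longlongrightarrow> W u) sequentially"
    and "u \<noteq> {} \<Longrightarrow> u \<subset> {1..p} \<Longrightarrow> filterlim (\<lambda>t. N t u) at_top F"
  shows "((\<lambda>t. agg_W p (W {1..p}) What (N t) \<omega> u) \<longlongrightarrow> W u) F"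
proof -
  consider "u = {}" | "u = {1..p}" | "u \<noteq> {}" "u \<subset> {1..p}"
    using assms(2) by blast
  then show ?thesis
  proof cases
    case 1
    show ?thesis unfolding 1 agg_W_empty assms(1) by (rule tendsto_const)
  next
    case 2
    show ?thesis unfolding 2 agg_W_top[of W, OF assms(1)] by (rule tendsto_const)
  next
    case 3
    then show ?thesis
      using filterlim_compose[OF assms(3,4)] by (simp add: agg_W_proper o_def)
  qed
qed

lemma conv_in_prob_shapley_agg_W:
  assumes "finite_measure M" "W {} = 0" "i \<in> {1..p}"
    and "\<And>u n. u \<noteq> {} \<Longrightarrow> u \<subset> {1..p} \<Longrightarrow> What u n \<in> borel_measurable M"
    and "\<And>u. u \<noteq> {} \<Longrightarrow> u \<subset> {1..p} \<Longrightarrow> conv_in_prob M (What u) (W u) sequentially"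
    and "\<And>u. u \<noteq> {} \<Longrightarrow> u \<subset> {1..p} \<Longrightarrow> filterlim (\<lambda>t. N t u) at_top F"
  shows "conv_in_prob M (\<lambda>t \<omega>. shapley_W p (agg_W p (W {1..p}) What (N t) \<omega>) i)
    (shapley_W p W i) F"
proof (rule conv_in_prob_shapley_W[OF assms(1,3)])
  fix u t
  assume "u \<subseteq> {1..p}"
  then show "(\<lambda>\<omega>. agg_W p (W {1..p}) What (N t) \<omega> u) \<in> borel_measurable M"
    by (rule agg_W_measurable[of W, OF assms(2)]) (rule assms(4))
next
  fix u
  assume "u \<subseteq> {1..p}"
  then show "conv_in_prob M (\<lambda>t \<omega>. agg_W p (W {1..p}) What (N t) \<omega> u) (W u) F"
    by (rule conv_in_prob_agg_W[of W, OF assms(2)]) (use assms(5,6) in blast)+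
qed (rule agg_W_top[of W, OF assms(2)])

lemma conv_as_shapley_agg_W:
  assumes "W {} = 0" "i \<in> {1..p}"
    and "\<And>u. u \<noteq> {} \<Longrightarrow> u \<subset> {1..p} \<Longrightarrow> conv_as M (What u) (W u) sequentially"
    and "\<And>u. u \<noteq> {} \<Longrightarrow> u \<subset> {1..p} \<Longrightarrow> filterlim (\<lambda>t. N t u) at_top F"
  shows "conv_as M (\<lambda>t \<omega>. shapley_W p (agg_W p (W {1..p}) What (N t) \<omega>) i) (shapley_W p W i) F"
proof -
  have "finite {u. u \<noteq> {} \<and> u \<subset> {1..p}}"
    by (rule finite_subset[of _ "Pow {1..p}"]) auto
  then have "AE \<omega> in M. \<forall>u\<in>{u. u \<noteq> {} \<and> u \<subset> {1..p}}. ((\<lambda>n. What u n \<omega>) \<longlongrightarrow> W u) sequentially"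
    using assms(3) by (intro AE_finite_allI) (auto simp: conv_as_def)
  then show ?thesis
    unfolding conv_as_def
  proof (rule eventually_mono)
    fix \<omega>
    assume conv: "\<forall>u\<in>{u. u \<noteq> {} \<and> u \<subset> {1..p}}. ((\<lambda>n. What u n \<omega>) \<longlongrightarrow> W u) sequentially"
    show "((\<lambda>t. shapley_W p (agg_W p (W {1..p}) What (N t) \<omega>) i) \<longlongrightarrow> shapley_W p W i) F"
    proof (rule tendsto_shapley_W[OF assms(2)])
      fix u
      assume "u \<subseteq> {1..p}"
      then show "((\<lambda>t. agg_W p (W {1..p}) What (N t) \<omega> u) \<longlongrightarrow> W u) F"
        by (rule tendsto_agg_W[of W, OF assms(1)]) (use conv assms(4) in blast)+
    qed (rule agg_W_top[of W, OF assms(1)])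
  qed
qed

theorem proposition4:
  fixes M :: "'a measure" and p :: nat and \<kappa> :: real
    and W :: "nat set \<Rightarrow> real"
    and What :: "nat set \<Rightarrow> nat \<Rightarrow> 'a \<Rightarrow> real"
  assumes "prob_space M"
    and "\<kappa> > 0"
    and "W {} = 0"
    and "\<And>u N. u \<noteq> {} \<Longrightarrow> u \<subset> {1..p} \<Longrightarrow> What u N \<in> borel_measurable M"
  shows "((\<forall>u. u \<noteq> {} \<and> u \<subset> {1..p} \<longrightarrow> conv_in_prob M (What u) (W u) sequentially) \<longrightarrow>
           (\<forall>i\<in>{1..p}. conv_in_prob M
              (\<lambda>Ntot \<omega>. shapley_W p (agg_W p (W {1..p}) What (N_star p \<kappa> Ntot) \<omega>) i)
              (shapley_W p W i) at_top))
       \<and> ((\<forall>u. u \<noteq> {} \<and> u \<subset> {1..p} \<longrightarrow> conv_as M (What u) (W u) sequentially) \<longrightarrow>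
           (\<forall>i\<in>{1..p}. conv_as M
              (\<lambda>Ntot \<omega>. shapley_W p (agg_W p (W {1..p}) What (N_star p \<kappa> Ntot) \<omega>) i)
              (shapley_W p W i) at_top))"
proof (intro conjI impI ballI)
  fix i
  assume "i \<in> {1..p}"
    and "\<forall>u. u \<noteq> {} \<and> u \<subset> {1..p} \<longrightarrow> conv_in_prob M (What u) (W u) sequentially"
  then show "conv_in_prob M (\<lambda>Ntot \<omega>. shapley_W p (agg_W p (W {1..p}) What (N_star p \<kappa> Ntot) \<omega>) i)
      (shapley_W p W i) at_top"
    using assms by (intro conv_in_prob_shapley_agg_W prob_space.axioms(1) N_star_at_top) blast+
next
  fix i
  assume "i \<in> {1..p}"
    and "\<forall>u. u \<noteq> {} \<and> u \<subset> {1..p} \<longrightarrow> conv_as M (What u) (W u) sequentially"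
  then show "conv_as M (\<lambda>Ntot \<omega>. shapley_W p (agg_W p (W {1..p}) What (N_star p \<kappa> Ntot) \<omega>) i)
      (shapley_W p W i) at_top"
    using assms by (intro conv_as_shapley_agg_W N_star_at_top) blast+
qed

end
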